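(* Let $A$ and $V$ be bounded self-adjoint operators on a Hilbert space $\mathfrak{H}$, $B=A+V$, and let $P$ be an orthogonal projection commuting with $A$. Assume that $PVP=P^\perp VP^\perp=0$, where $P^\perp=I-P$. Denote by $A_0$ and $A_1$ the parts of $A$ in its invariant subspaces $\mathrm{Ran}\,P$ and $\mathrm{Ran}\,P^\perp$, respectively. Then $$\inf A-\delta_V^\ell\le\inf B\le\inf A\quad\text{and}\quad \sup A\le\sup B\le\sup A+\delta_V^r,$$ where $$\delta_V^\ell=\|V\|\tan\Big(\tfrac12\arctan\frac{2\|V\|}{|\inf A_1-\inf A_0|}\Big),\qquad \delta_V^r=\|V\|\tan\Big(\tfrac12\arctan\frac{2\|V\|}{|\sup A_1-\sup A_0|}\Big),$$ with the convention $\arctan(+\infty)=\pi/2$ when $\inf A_1=\inf A_0$ and/or $\sup A_1=\sup A_0$.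
   Context: For a bounded self-adjoint operator $T$, $\inf T$ and $\sup T$ denote the infimum and supremum of $\mathrm{spec}(T)$. *)

theory Defs
  imports "HOL-Analysis.Analysis"
begin

text \<open>Real spectrum of an operator T restricted to an invariant (closed) subspace S:
  the reals lambda for which T - lambda I is not a bijection of S onto S.
  (For bounded operators on a closed subspace of a Hilbert space, bounded inverse is
  automatic by the open mapping theorem.)\<close>
definition spec_on :: "'a::real_normed_vector set \<Rightarrow> ('a \<Rightarrow> 'a) \<Rightarrow> real set" where
  "spec_on S T = {l. \<not> bij_betw (\<lambda>x. T x - l *\<^sub>R x) S S}"

definition spec :: "('a::real_normed_vector \<Rightarrow> 'a) \<Rightarrow> real set" where
  "spec T = spec_on UNIV T"

definition self_adjoint :: "('a::real_inner \<Rightarrow>\<^sub>L 'a) \<Rightarrow> bool" where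
  "self_adjoint T \<longleftrightarrow> (\<forall>x y. inner (T x) y = inner x (T y))"

definition orth_proj :: "('a::real_inner \<Rightarrow>\<^sub>L 'a) \<Rightarrow> bool" where
  "orth_proj P \<longleftrightarrow> self_adjoint P \<and> (\<forall>x. P (P x) = P x)"

definition delta_shift :: "real \<Rightarrow> real \<Rightarrow> real" where
  "delta_shift v d = (if d = 0 then v * tan (pi / 4) else v * tan (arctan (2 * v / \<bar>d\<bar>) / 2))"

end

theory Submission
  imports Defs
begin

text \<open>For a self-adjoint T and a closed T-invariant subspace S, the bottom of the spectrum of T
  on S is the infimum of the Rayleigh quotient \<langle>T x, x\<rangle> over unit vectors of S: below it,
  T - l is coercive on S and hence invertible by the contraction principle; at it, T - l is
  nonnegative but not bounded below, while an invertible self-adjoint operator has a bounded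
  inverse by the Hellinger--Toeplitz theorem (a Baire category argument).

  Split x = P x + (x - P x) with norms s and t. Since V has no diagonal blocks, the form of
  A + V is \<langle>A P x, P x\<rangle> + \<langle>A x', x'\<rangle> + 2 \<langle>V P x, x'\<rangle> with x' = x - P x, which is at
  least a0 s^2 + a1 t^2 - 2 \<parallel>V\<parallel> s t, where a0, a1 are the spectral bottoms of the two parts
  of A; on the unit circle this quadratic form is at least min a0 a1 - \<delta>. On Ran P and on
  Ran P^\<bottom> the forms of A and A + V agree, which gives inf (A + V) \<le> min a0 a1 = inf A.
  The bounds for the suprema follow by applying this to -A and -V.\<close>

section \<open>Two-by-two quadratic forms\<close>

lemma delta_shift_eq_sqrt:
  assumes "v \<ge> 0"
  shows "delta_shift v d = (sqrt (d\<^sup>2 + 4 * v\<^sup>2) - \<bar>d\<bar>) / 2"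
proof (cases "d = 0")
  case True
  then show ?thesis
    using assms by (simp add: delta_shift_def tan_45 real_sqrt_mult)
next
  case False
  define r where "r = sqrt (d\<^sup>2 + 4 * v\<^sup>2)"
  have d: "\<bar>d\<bar> > 0" using False by simp
  have r: "r\<^sup>2 = d\<^sup>2 + 4 * v\<^sup>2" "r \<ge> \<bar>d\<bar>"
    unfolding r_def by (simp_all add: real_le_rsqrt)
  define u where "u = 2 * v / \<bar>d\<bar>"
  have sqrt_u: "sqrt (1 + u\<^sup>2) = r / \<bar>d\<bar>"
  proof -
    have "1 + u\<^sup>2 = (r / \<bar>d\<bar>)\<^sup>2"
      using d r(1) by (simp add: u_def field_simps power2_eq_square)
    then show ?thesis using d r(2) by simp
  qed
  have "tan (arctan u / 2) = (u / sqrt (1 + u\<^sup>2)) / (1 / sqrt (1 + u\<^sup>2) + 1)"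
    using tan_half[of "arctan u / 2"] by (simp add: sin_arctan cos_arctan)
  also have "\<dots> = 2 * v / (\<bar>d\<bar> + r)"
    unfolding sqrt_u using d r(2) by (simp add: u_def field_simps)
  finally have "delta_shift v d = 2 * v\<^sup>2 / (\<bar>d\<bar> + r)"
    using False by (simp add: delta_shift_def u_def power2_eq_square)
  also have "\<dots> = (r - \<bar>d\<bar>) / 2"
    using d r by (simp add: field_simps power2_eq_square)
  finally show ?thesis by (simp add: r_def)
qed

lemma delta_shift_uminus [simp]: "delta_shift v (- d) = delta_shift v d"
  by (simp add: delta_shift_def)

lemma delta_shift_nonneg: "v \<ge> 0 \<Longrightarrow> delta_shift v d \<ge> 0"
  by (simp add: delta_shift_eq_sqrt real_le_rsqrt)

lemma delta_shift_quadratic: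
  assumes "v \<ge> 0"
  shows "delta_shift v d * (\<bar>d\<bar> + delta_shift v d) = v\<^sup>2"
proof -
  have "(sqrt (d\<^sup>2 + 4 * v\<^sup>2))\<^sup>2 = d\<^sup>2 + 4 * v\<^sup>2" by simp
  then show ?thesis
    using assms by (simp add: delta_shift_eq_sqrt field_simps power2_eq_square)
qed

lemma delta_shift_form_nonneg:
  assumes "v \<ge> 0"
  shows "0 \<le> delta_shift v d * s\<^sup>2 - 2 * v * s * t + (\<bar>d\<bar> + delta_shift v d) * t\<^sup>2"
    (is "0 \<le> ?q")
proof -
  define \<delta> where "\<delta> = delta_shift v d"
  have \<delta>: "\<delta> \<ge> 0" "\<delta> * (\<bar>d\<bar> + \<delta>) = v\<^sup>2"
    using assms by (simp_all add: \<delta>_def delta_shift_nonneg delta_shift_quadratic)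
  have "\<delta> * ?q = \<delta>\<^sup>2 * s\<^sup>2 - 2 * \<delta> * v * s * t + (\<delta> * (\<bar>d\<bar> + \<delta>)) * t\<^sup>2"
    by (simp add: \<delta>_def power2_eq_square algebra_simps)
  also have "\<dots> = (\<delta> * s - v * t)\<^sup>2"
    unfolding \<delta>(2) by (simp add: power2_eq_square algebra_simps)
  finally have "\<delta> * ?q \<ge> 0" by simp
  moreover have "?q \<ge> 0" if "\<delta> = 0"
    using that \<delta>(2) by (simp add: \<delta>_def)
  ultimately show ?thesis
    using \<delta>(1) by (cases "\<delta> = 0") (auto simp: zero_le_mult_iff)
qed

text \<open>min a0 a1 - delta_shift v (a1 - a0) is the smallest eigenvalue of the symmetric
  2 \<times> 2 matrix with diagonal a0, a1 and off-diagonal entries v.\<close>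

lemma block_form_lower_bound:
  fixes a0 a1 s t v w :: real
  assumes "s \<ge> 0" "t \<ge> 0" "v \<ge> 0" "\<bar>w\<bar> \<le> v * s * t"
  shows "(min a0 a1 - delta_shift v (a1 - a0)) * (s\<^sup>2 + t\<^sup>2) \<le> a0 * s\<^sup>2 + a1 * t\<^sup>2 + 2 * w"
proof (cases "a0 \<le> a1")
  case True
  then show ?thesis
    using delta_shift_form_nonneg[OF assms(3), of "a1 - a0" s t] assms(4)
    by (simp add: algebra_simps)
next
  case False
  then show ?thesis
    using delta_shift_form_nonneg[OF assms(3), of "a1 - a0" t s] assms(4)
    by (simp add: algebra_simps)
qed

section \<open>Rayleigh quotients\<close>

definition rayleigh_inf :: "'a::real_inner set \<Rightarrow> ('a \<Rightarrow> 'a) \<Rightarrow> real" where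
  "rayleigh_inf S T = Inf ((\<lambda>x. inner (T x) x) ` (S \<inter> sphere 0 1))"

lemma subspace_unit_vector_exists:
  assumes "subspace S" "S \<noteq> {0}"
  obtains x where "x \<in> S" "norm x = 1"
proof -
  obtain y where "y \<in> S" "y \<noteq> 0"
    using assms subspace_0 by blast
  then show ?thesis
    using that[of "y /\<^sub>R norm y"] assms(1) by (simp add: subspace_scale)
qed

lemma bdd_below_rayleigh_quotients:
  fixes T :: "'a::real_inner \<Rightarrow>\<^sub>L 'a"
  shows "bdd_below ((\<lambda>x. inner (T x) x) ` (S \<inter> sphere 0 1))"
proof (rule bdd_belowI)
  fix r assume "r \<in> (\<lambda>x. inner (T x) x) ` (S \<inter> sphere 0 1)"
  then obtain x where x: "norm x = 1" "r = inner (T x) x" by auto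
  have "\<bar>inner (T x) x\<bar> \<le> norm (T x) * norm x" by (rule Cauchy_Schwarz_ineq2)
  also have "\<dots> \<le> norm T" using x norm_blinfun[of T x] by simp
  finally show "- norm T \<le> r" using x by linarith
qed

lemma rayleigh_inf_le:
  fixes T :: "'a::real_inner \<Rightarrow>\<^sub>L 'a"
  assumes "x \<in> S" "norm x = 1"
  shows "rayleigh_inf S T \<le> inner (T x) x"
  unfolding rayleigh_inf_def using assms
  by (intro cInf_lower bdd_below_rayleigh_quotients) auto

lemma rayleigh_inf_mult_norm_le:
  fixes T :: "'a::real_inner \<Rightarrow>\<^sub>L 'a"
  assumes "subspace S" "x \<in> S"
  shows "rayleigh_inf S T * (norm x)\<^sup>2 \<le> inner (T x) x"
proof (cases "x = 0")
  case False
  have "rayleigh_inf S T \<le> inner (T (x /\<^sub>R norm x)) (x /\<^sub>R norm x)"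
    using assms False by (intro rayleigh_inf_le) (simp_all add: subspace_scale)
  also have "\<dots> = inner (T x) x / (norm x)\<^sup>2"
    by (simp add: blinfun.scaleR_right power2_eq_square field_simps)
  finally show ?thesis using False by (simp add: field_simps)
qed simp

lemma rayleigh_inf_greatest:
  assumes "subspace S" "S \<noteq> {0}"
    and "\<And>x. x \<in> S \<Longrightarrow> norm x = 1 \<Longrightarrow> c \<le> inner (T x) x"
  shows "c \<le> rayleigh_inf S T"
proof -
  obtain x where "x \<in> S" "norm x = 1"
    using subspace_unit_vector_exists[OF assms(1,2)] .
  then show ?thesis
    unfolding rayleigh_inf_def using assms(3) by (intro cInf_greatest) auto
qed

lemma rayleigh_inf_mono:
  fixes T :: "'a::real_inner \<Rightarrow>\<^sub>L 'a"
  assumes "subspace S" "S \<noteq> {0}" "S \<subseteq> S'"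
  shows "rayleigh_inf S' T \<le> rayleigh_inf S T"
  using assms by (intro rayleigh_inf_greatest rayleigh_inf_le) auto

lemma rayleigh_inf_cong:
  assumes "\<And>x. x \<in> S \<Longrightarrow> inner (T x) x = inner (T' x) x"
  shows "rayleigh_inf S T = rayleigh_inf S T'"
  unfolding rayleigh_inf_def using assms by (intro arg_cong[where f = Inf] image_cong) auto

lemma rayleigh_inf_less:
  fixes T :: "'a::real_inner \<Rightarrow>\<^sub>L 'a"
  assumes "subspace S" "S \<noteq> {0}" "rayleigh_inf S T < r"
  obtains x where "x \<in> S" "norm x = 1" "inner (T x) x < r"
proof -
  obtain x0 where "x0 \<in> S" "norm x0 = 1"
    using subspace_unit_vector_exists[OF assms(1,2)] .
  then have "(\<lambda>x. inner (T x) x) ` (S \<inter> sphere 0 1) \<noteq> {}" by auto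
  then obtain r' where "r' \<in> (\<lambda>x. inner (T x) x) ` (S \<inter> sphere 0 1)" "r' < r"
    using assms(3) cInf_less_iff[OF _ bdd_below_rayleigh_quotients]
    unfolding rayleigh_inf_def by blast
  then show ?thesis using that by auto
qed

section \<open>The bottom of the spectrum\<close>

lemma norm_diff_scaleR_coercive_le:
  fixes T :: "'a::real_inner \<Rightarrow>\<^sub>L 'a"
  assumes coercive: "c * (norm u)\<^sup>2 \<le> inner (T u) u"
    and "0 < c" "c \<le> K" "norm T \<le> K"
  shows "norm (u - (c / K\<^sup>2) *\<^sub>R T u) \<le> sqrt (1 - c\<^sup>2 / K\<^sup>2) * norm u"
proof -
  define \<alpha> where "\<alpha> = c / K\<^sup>2"
  have K: "K > 0" using assms by linarith
  have "c\<^sup>2 / K\<^sup>2 \<le> 1" using assms by (simp add: power_mono)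
  have "norm (T u) \<le> K * norm u"
    using norm_blinfun[of T u] assms(4) by (meson mult_right_mono norm_ge_zero order_trans)
  then have Tu: "(norm (T u))\<^sup>2 \<le> K\<^sup>2 * (norm u)\<^sup>2"
    by (metis norm_ge_zero power_mono power_mult_distrib)
  have "(norm (u - \<alpha> *\<^sub>R T u))\<^sup>2 = (norm u)\<^sup>2 - 2 * \<alpha> * inner (T u) u + \<alpha>\<^sup>2 * (norm (T u))\<^sup>2"
    unfolding power2_norm_eq_inner
    by (simp add: inner_diff_left inner_diff_right inner_commute algebra_simps power2_eq_square)
  also have "\<dots> \<le> (norm u)\<^sup>2 - 2 * \<alpha> * (c * (norm u)\<^sup>2) + \<alpha>\<^sup>2 * (K\<^sup>2 * (norm u)\<^sup>2)"
    using coercive Tu \<open>0 < c\<close> K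
    by (intro add_mono diff_mono mult_left_mono) (auto simp: \<alpha>_def)
  also have "\<dots> = (1 - c\<^sup>2 / K\<^sup>2) * (norm u)\<^sup>2"
    using K by (simp add: \<alpha>_def power_divide field_simps power2_eq_square)
  also have "\<dots> = (sqrt (1 - c\<^sup>2 / K\<^sup>2) * norm u)\<^sup>2"
    using \<open>c\<^sup>2 / K\<^sup>2 \<le> 1\<close> by (simp add: power_mult_distrib)
  finally have "(norm (u - \<alpha> *\<^sub>R T u))\<^sup>2 \<le> (sqrt (1 - c\<^sup>2 / K\<^sup>2) * norm u)\<^sup>2" .
  then show ?thesis
    unfolding \<alpha>_def[symmetric] using \<open>c\<^sup>2 / K\<^sup>2 \<le> 1\<close> by (auto intro: power2_le_imp_le)
qed

lemma coercive_imp_bij_betw: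
  fixes T :: "'a::{real_inner,complete_space} \<Rightarrow>\<^sub>L 'a"
  assumes S: "subspace S" "closed S" and TS: "T ` S \<subseteq> S"
    and "0 < c" and coercive: "\<And>x. x \<in> S \<Longrightarrow> c * (norm x)\<^sup>2 \<le> inner (T x) x"
  shows "bij_betw T S S"
proof (rule bij_betw_imageI)
  show "inj_on T S"
  proof (rule inj_onI)
    fix x y assume xy: "x \<in> S" "y \<in> S" "T x = T y"
    then have "c * (norm (x - y))\<^sup>2 \<le> 0"
      using coercive[of "x - y"] S by (simp add: subspace_diff blinfun.diff_right)
    then show "x = y" using \<open>0 < c\<close> by (simp add: mult_le_0_iff)
  qed
  show "T ` S = S"
  proof
    show "S \<subseteq> T ` S"
    proof
      fix y assume y: "y \<in> S"
      \<comment> \<open>solve T z = y as the fixed point of a contraction of S (Lax--Milgram)\<close>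
      define K where "K = norm T + c"
      define q where "q = sqrt (1 - c\<^sup>2 / K\<^sup>2)"
      define f where "f z = z - (c / K\<^sup>2) *\<^sub>R (T z - y)" for z
      have K: "c \<le> K" "norm T \<le> K" "0 < K" using \<open>0 < c\<close> by (simp_all add: K_def add_nonneg_pos)
      have q: "0 \<le> q" "q < 1"
        using K \<open>0 < c\<close> by (auto simp: q_def divide_le_eq_1 power_mono)
      have "f ` S \<subseteq> S"
        using S TS y by (auto simp: f_def subspace_diff subspace_scale)
      moreover have "\<forall>z\<in>S. \<forall>w\<in>S. dist (f z) (f w) \<le> q * dist z w"
      proof (intro ballI)
        fix z w assume "z \<in> S" "w \<in> S"
        have "f z - f w = (z - w) - (c / K\<^sup>2) *\<^sub>R T (z - w)"
          by (simp add: f_def blinfun.diff_right algebra_simps)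
        then show "dist (f z) (f w) \<le> q * dist z w"
          using norm_diff_scaleR_coercive_le[OF coercive \<open>0 < c\<close> K(1,2)] \<open>z \<in> S\<close> \<open>w \<in> S\<close> S
          by (simp add: dist_norm q_def subspace_diff)
      qed
      ultimately have "\<exists>!z\<in>S. f z = z"
        using S q subspace_0[OF S(1)] by (intro Banach_fix) (auto simp: complete_eq_closed)
      then obtain z where "z \<in> S" "f z = z" by blast
      then show "y \<in> T ` S"
        using \<open>0 < c\<close> K by (force simp: f_def)
    qed
  qed (use TS in blast)
qed

lemma Baire_closed_cover:
  fixes S :: "'a::complete_space set"
  assumes "closed S" "S \<noteq> {}" "\<And>k::nat. closed (F k)" "S \<subseteq> (\<Union>k. F k)"
  obtains k y \<epsilon> where "y \<in> S" "0 < \<epsilon>" "ball y \<epsilon> \<inter> S \<subseteq> F k"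
proof -
  have "\<exists>k. top_of_set S interior_of (S \<inter> F k) \<noteq> {}"
  proof (rule ccontr)
    assume "\<not> ?thesis"
    moreover have "completely_metrizable_space (top_of_set S)"
      using assms(1) closed_closedin completely_metrizable_space_closedin
        completely_metrizable_space_euclidean by blast
    moreover have "closedin (top_of_set S) (S \<inter> F k)" for k
      using assms(3) by (simp add: closedin_closed_Int)
    ultimately have "top_of_set S interior_of (\<Union>k. S \<inter> F k) = {}"
      by (intro Baire_category_alt) auto
    moreover have "(\<Union>k. S \<inter> F k) = S" using assms(4) by blast
    ultimately show False
      using assms(2) interior_of_topspace[of "top_of_set S"] by simp
  qed
  then obtain k U where U: "openin (top_of_set S) U" "U \<noteq> {}" "U \<subseteq> S \<inter> F k"
    by (meson interior_of_eq_empty)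
  then obtain y \<epsilon> where "y \<in> U" "0 < \<epsilon>" "ball y \<epsilon> \<inter> S \<subseteq> U"
    by (meson ex_in_conv openin_contains_ball)
  then show ?thesis using that U by blast
qed

lemma homogeneous_bounded_near_0:
  fixes R :: "'a::real_normed_vector \<Rightarrow> 'b::real_normed_vector"
  assumes "subspace S" "0 < \<epsilon>" and scale: "\<And>a y. y \<in> S \<Longrightarrow> R (a *\<^sub>R y) = a *\<^sub>R R y"
    and small: "\<And>u. u \<in> S \<Longrightarrow> norm u < \<epsilon> \<Longrightarrow> norm (R u) \<le> M"
    and y: "y \<in> S"
  shows "norm (R y) \<le> 2 * M / \<epsilon> * norm y"
proof (cases "y = 0")
  case False
  define a where "a = \<epsilon> / (2 * norm y)"
  have "a > 0" using assms False by (simp add: a_def)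
  have "norm (R (a *\<^sub>R y)) \<le> M"
    using False assms by (intro small) (simp_all add: a_def subspace_scale)
  then show ?thesis
    using scale[OF y] \<open>a > 0\<close> False assms by (simp add: a_def field_simps)
qed (use scale[of 0 0] subspace_0[OF assms(1)] in simp)

lemma Hellinger_Toeplitz:
  fixes R :: "'a::{real_inner,complete_space} \<Rightarrow> 'a"
  assumes S: "subspace S" "closed S" and RS: "R ` S \<subseteq> S"
    and add: "\<And>y z. y \<in> S \<Longrightarrow> z \<in> S \<Longrightarrow> R (y + z) = R y + R z"
    and scale: "\<And>a y. y \<in> S \<Longrightarrow> R (a *\<^sub>R y) = a *\<^sub>R R y"
    and sym: "\<And>y z. y \<in> S \<Longrightarrow> z \<in> S \<Longrightarrow> inner (R y) z = inner y (R z)"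
  shows "\<exists>C. \<forall>y\<in>S. norm (R y) \<le> C * norm y"
proof -
  \<comment> \<open>closed although R need not be continuous: an intersection of closed half-spaces\<close>
  define F where "F k = {y. \<forall>z\<in>S. \<bar>inner y (R z)\<bar> \<le> real k * norm z}" for k :: nat
  have F_iff: "y \<in> F k \<longleftrightarrow> norm (R y) \<le> real k" if "y \<in> S" for y k
  proof
    assume "y \<in> F k"
    then have "(norm (R y))\<^sup>2 \<le> real k * norm (R y)"
      using sym[of y "R y"] RS that by (force simp: F_def power2_norm_eq_inner)
    then show "norm (R y) \<le> real k"
      by (cases "R y = 0") (auto simp: power2_eq_square)
  next
    assume "norm (R y) \<le> real k"
    then have "\<bar>inner (R y) z\<bar> \<le> real k * norm z" for z
      using Cauchy_Schwarz_ineq2[of "R y" z] by (meson mult_right_mono norm_ge_zero order_trans)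
    then show "y \<in> F k" by (simp add: F_def sym[OF that, symmetric])
  qed
  have closed: "closed (F k)" for k
  proof -
    have "F k = (\<Inter>z\<in>S. {y. \<bar>inner y (R z)\<bar> \<le> real k * norm z})" by (auto simp: F_def)
    then show ?thesis by (simp add: closed_INT closed_Collect_le continuous_intros)
  qed
  have cover: "S \<subseteq> (\<Union>k. F k)"
  proof
    fix y assume "y \<in> S"
    then have "y \<in> F (nat \<lceil>norm (R y)\<rceil>)" using F_iff real_nat_ceiling_ge by simp
    then show "y \<in> (\<Union>k. F k)" by (rule UN_I[OF UNIV_I])
  qed
  have "S \<noteq> {}" using subspace_0[OF S(1)] by auto
  then obtain k y0 \<epsilon> where y0: "y0 \<in> S" "0 < \<epsilon>" "ball y0 \<epsilon> \<inter> S \<subseteq> F k"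
    using Baire_closed_cover[OF S(2) _ closed cover] by metis
  \<comment> \<open>by additivity, the bound k on a ball around y0 becomes the bound 2k near 0\<close>
  have small: "norm (R u) \<le> 2 * real k" if "u \<in> S" "norm u < \<epsilon>" for u
  proof -
    have "y0 \<in> F k" "y0 + u \<in> F k"
      using y0 that S by (auto simp: subspace_add dist_norm)
    then have "norm (R y0) \<le> real k" "norm (R (y0 + u)) \<le> real k"
      using F_iff y0(1) that(1) S(1) by (simp_all add: subspace_add)
    then show ?thesis
      using add[OF y0(1) that(1)] norm_triangle_ineq4[of "R y0 + R u" "R y0"] by simp
  qed
  then show ?thesis
    using homogeneous_bounded_near_0[OF S(1) y0(2) scale] by blast
qed

lemma self_adjoint_bij_betw_bounded_below:
  fixes T :: "'a::{real_inner,complete_space} \<Rightarrow>\<^sub>L 'a"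
  assumes S: "subspace S" "closed S" and "self_adjoint T" and bij: "bij_betw T S S"
  obtains c where "c > 0" "\<And>x. x \<in> S \<Longrightarrow> c * norm x \<le> norm (T x)"
proof -
  define R where "R = inv_into S T"
  have R: "R y \<in> S" "T (R y) = y" if "y \<in> S" for y
    using that bij by (auto simp: R_def bij_betw_def inv_into_into f_inv_into_f)
  have RT: "R (T x) = x" if "x \<in> S" for x
    using that bij by (simp add: R_def bij_betw_def)
  have TS: "T x \<in> S" if "x \<in> S" for x
    using that bij by (auto simp: bij_betw_def)
  have R_eqI: "R y = x" if "x \<in> S" "T x = y" for x y
    using RT that by blast
  have RS: "R ` S \<subseteq> S" using R by blast
  have add: "R (y + z) = R y + R z" if "y \<in> S" "z \<in> S" for y z
    using that R S by (intro R_eqI) (simp_all add: subspace_add blinfun.add_right)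
  have scale: "R (a *\<^sub>R y) = a *\<^sub>R R y" if "y \<in> S" for a y
    using that R S by (intro R_eqI) (simp_all add: subspace_scale blinfun.scaleR_right)
  have sym: "inner (R y) z = inner y (R z)" if "y \<in> S" "z \<in> S" for y z
    using that R \<open>self_adjoint T\<close> unfolding self_adjoint_def by metis
  obtain C where C: "\<And>y. y \<in> S \<Longrightarrow> norm (R y) \<le> C * norm y"
    using Hellinger_Toeplitz[OF S RS add scale sym] by blast
  have "norm x \<le> (max C 0 + 1) * norm (T x)" if "x \<in> S" for x
  proof -
    have "norm x \<le> C * norm (T x)" using C[of "T x"] RT TS that by simp
    also have "\<dots> \<le> (max C 0 + 1) * norm (T x)" by (intro mult_right_mono) auto
    finally show ?thesis .
  qed
  then show ?thesis
    using that[of "1 / (max C 0 + 1)"] by (simp add: field_simps add_nonneg_pos)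
qed

lemma nonneg_quadratic_discriminant:
  fixes a b c :: real
  assumes nonneg: "\<And>t. 0 \<le> a + 2 * t * b + t\<^sup>2 * c" and "c \<ge> 0"
  shows "b\<^sup>2 \<le> a * c"
proof (cases "c = 0")
  case True
  have "b = 0"
  proof (rule ccontr)
    assume "b \<noteq> 0"
    then show False using nonneg[of "- (a + 1) / (2 * b)"] True by (simp add: field_simps)
  qed
  then show ?thesis using True by simp
next
  case False
  then have "0 \<le> a - b\<^sup>2 / c"
    using nonneg[of "- b / c"] by (simp add: power2_eq_square field_simps)
  then show ?thesis using False \<open>c \<ge> 0\<close> by (simp add: field_simps)
qed

lemma nonneg_operator_norm_sq_le:
  fixes Q :: "'a::real_inner \<Rightarrow>\<^sub>L 'a"
  assumes S: "subspace S" "Q ` S \<subseteq> S" and "self_adjoint Q"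
    and nonneg: "\<And>x. x \<in> S \<Longrightarrow> 0 \<le> inner (Q x) x" and x: "x \<in> S"
  shows "(norm (Q x))\<^sup>2 \<le> norm Q * inner (Q x) x"
proof -
  define y where "y = Q x"
  have "y \<in> S" using S x by (auto simp: y_def)
  \<comment> \<open>Cauchy--Schwarz for the semi-inner product (x, y) \<mapsto> \<langle>Q x, y\<rangle>\<close>
  have "0 \<le> inner (Q x) x + 2 * t * inner (Q x) y + t\<^sup>2 * inner (Q y) y" for t
  proof -
    have "0 \<le> inner (Q (x + t *\<^sub>R y)) (x + t *\<^sub>R y)"
      using S x \<open>y \<in> S\<close> by (intro nonneg) (simp add: subspace_add subspace_scale)
    also have "\<dots> = inner (Q x) x + 2 * t * inner (Q x) y + t\<^sup>2 * inner (Q y) y"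
      using \<open>self_adjoint Q\<close>
      by (simp add: self_adjoint_def blinfun.add_right blinfun.scaleR_right inner_add_left
          inner_add_right inner_commute[of x "Q y"] power2_eq_square algebra_simps)
    finally show ?thesis .
  qed
  then have "((norm y)\<^sup>2)\<^sup>2 \<le> inner (Q x) x * inner (Q y) y"
    using nonneg_quadratic_discriminant nonneg[OF \<open>y \<in> S\<close>]
    by (simp add: y_def power2_norm_eq_inner)
  also have "\<dots> \<le> inner (Q x) x * (norm Q * (norm y)\<^sup>2)"
  proof (intro mult_left_mono nonneg x)
    have "inner (Q y) y \<le> norm (Q y) * norm y" by (rule norm_cauchy_schwarz)
    also have "\<dots> \<le> norm Q * norm y * norm y" by (simp add: mult_right_mono norm_blinfun)
    finally show "inner (Q y) y \<le> norm Q * (norm y)\<^sup>2" by (simp add: power2_eq_square)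
  qed
  finally have sq: "(norm y)\<^sup>2 * (norm y)\<^sup>2 \<le> (norm Q * inner (Q x) x) * (norm y)\<^sup>2"
    by (simp add: power2_eq_square algebra_simps)
  show ?thesis
  proof (cases "y = 0")
    case False
    then show ?thesis using mult_right_le_imp_le[OF sq] by (simp add: y_def)
  qed (use nonneg[OF x] in \<open>simp add: y_def\<close>)
qed

lemma self_adjoint_add: "self_adjoint S \<Longrightarrow> self_adjoint T \<Longrightarrow> self_adjoint (S + T)"
  by (simp add: self_adjoint_def blinfun.add_left inner_add_left inner_add_right)

lemma self_adjoint_uminus: "self_adjoint T \<Longrightarrow> self_adjoint (- T)"
  by (simp add: self_adjoint_def blinfun.minus_left)

lemma blinfun_apply_diff_scaleR_id [simp]:
  fixes T :: "'a::real_normed_vector \<Rightarrow>\<^sub>L 'a"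
  shows "blinfun_apply (T - l *\<^sub>R id_blinfun) = (\<lambda>x. T x - l *\<^sub>R x)"
  by (rule ext) (simp add: blinfun.diff_left blinfun.scaleR_left)

lemma self_adjoint_diff_scaleR_id:
  fixes T :: "'a::real_inner \<Rightarrow>\<^sub>L 'a"
  shows "self_adjoint T \<Longrightarrow> self_adjoint (T - l *\<^sub>R id_blinfun)"
  by (simp add: self_adjoint_def inner_diff_left inner_diff_right)

lemma spec_on_iff:
  fixes T :: "'a::real_normed_vector \<Rightarrow>\<^sub>L 'a"
  shows "l \<in> spec_on S T \<longleftrightarrow> \<not> bij_betw (T - l *\<^sub>R id_blinfun) S S"
  by (simp add: spec_on_def)

lemma diff_scaleR_id_invariant:
  fixes T :: "'a::real_normed_vector \<Rightarrow>\<^sub>L 'a"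
  assumes "subspace S" "T ` S \<subseteq> S"
  shows "(T - l *\<^sub>R id_blinfun) ` S \<subseteq> S"
  using assms by (auto simp: subspace_diff subspace_scale)

lemma rayleigh_inf_le_spec_on:
  fixes T :: "'a::{real_inner,complete_space} \<Rightarrow>\<^sub>L 'a"
  assumes S: "subspace S" "closed S" "T ` S \<subseteq> S" and "l \<in> spec_on S T"
  shows "rayleigh_inf S T \<le> l"
proof (rule ccontr)
  assume "\<not> rayleigh_inf S T \<le> l"
  then have "bij_betw (T - l *\<^sub>R id_blinfun) S S"
    using rayleigh_inf_mult_norm_le[OF S(1)]
    by (intro coercive_imp_bij_betw[where c = "rayleigh_inf S T - l"] S diff_scaleR_id_invariant)
       (auto simp: inner_diff_left power2_norm_eq_inner algebra_simps)
  then show False using \<open>l \<in> spec_on S T\<close> by (simp add: spec_on_iff)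
qed

lemma rayleigh_inf_in_spec_on:
  fixes T :: "'a::{real_inner,complete_space} \<Rightarrow>\<^sub>L 'a"
  assumes S: "subspace S" "closed S" "T ` S \<subseteq> S" "S \<noteq> {0}" and "self_adjoint T"
  shows "rayleigh_inf S T \<in> spec_on S T"
proof (rule ccontr)
  define m where "m = rayleigh_inf S T"
  define Q where "Q = T - m *\<^sub>R id_blinfun"
  have Q: "Q ` S \<subseteq> S" "self_adjoint Q"
    using diff_scaleR_id_invariant[OF S(1,3)] self_adjoint_diff_scaleR_id[OF \<open>self_adjoint T\<close>]
    by (simp_all add: Q_def)
  have nonneg: "0 \<le> inner (Q x) x" if "x \<in> S" for x
    using rayleigh_inf_mult_norm_le[OF S(1) that]
    by (simp add: Q_def m_def inner_diff_left power2_norm_eq_inner)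
  assume "m \<notin> spec_on S T"
  then have "bij_betw Q S S" by (simp add: Q_def spec_on_iff)
  then obtain c where c: "c > 0" "\<And>x. x \<in> S \<Longrightarrow> c * norm x \<le> norm (Q x)"
    using self_adjoint_bij_betw_bounded_below[OF S(1,2) Q(2)] by blast
  \<comment> \<open>yet the form of Q gets arbitrarily small on the unit sphere and dominates \<parallel>Q x\<parallel>^2 / \<parallel>Q\<parallel>\<close>
  define \<epsilon> where "\<epsilon> = c\<^sup>2 / (norm Q + 1)"
  have "\<epsilon> > 0" using c by (simp add: \<epsilon>_def add_nonneg_pos)
  then obtain x where x: "x \<in> S" "norm x = 1" "inner (T x) x < m + \<epsilon>"
    using rayleigh_inf_less[OF S(1,4)] by (metis less_add_same_cancel1 m_def)
  have "c\<^sup>2 \<le> (norm (Q x))\<^sup>2"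
    using c x by (metis mult.right_neutral norm_ge_zero power_mono less_imp_le)
  also have "\<dots> \<le> norm Q * inner (Q x) x"
    using nonneg_operator_norm_sq_le[OF S(1) Q nonneg x(1)] .
  also have "\<dots> \<le> norm Q * \<epsilon>"
    using x by (intro mult_left_mono) (simp_all add: Q_def inner_diff_left power2_norm_eq_inner[symmetric])
  also have "\<dots> < (norm Q + 1) * \<epsilon>"
    using \<open>\<epsilon> > 0\<close> by simp
  also have "\<dots> = c\<^sup>2"
    using norm_ge_zero[of Q] by (simp add: \<epsilon>_def add_nonneg_eq_0_iff)
  finally show False by simp
qed

lemma Inf_spec_on_eq_rayleigh_inf:
  fixes T :: "'a::{real_inner,complete_space} \<Rightarrow>\<^sub>L 'a"
  assumes "subspace S" "closed S" "T ` S \<subseteq> S" "S \<noteq> {0}" "self_adjoint T"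
  shows "Inf (spec_on S T) = rayleigh_inf S T"
  using assms by (intro cInf_eq_minimum rayleigh_inf_in_spec_on rayleigh_inf_le_spec_on)

lemma spec_on_uminus:
  fixes T :: "'a::real_normed_vector \<Rightarrow>\<^sub>L 'a"
  assumes "subspace S"
  shows "spec_on S (- T) = uminus ` spec_on S T"
proof -
  have neg_S: "uminus ` S = S"
  proof
    show "uminus ` S \<subseteq> S" using assms by (auto simp: subspace_neg)
    show "S \<subseteq> uminus ` S"
      using assms by (auto simp: subspace_neg intro: image_eqI[where x = "- x" for x])
  qed
  have bij_uminus: "bij_betw (\<lambda>x. - g x) S S \<longleftrightarrow> bij_betw g S S" for g :: "'a \<Rightarrow> 'a"
  proof -
    have "(\<lambda>x. - g x) ` S = uminus ` (g ` S)" by auto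
    moreover have "uminus ` X = S \<longleftrightarrow> X = S" for X :: "'a set"
    proof
      assume "uminus ` X = S"
      then have "uminus ` uminus ` X = uminus ` S" by simp
      then show "X = S" using neg_S by (simp add: image_image)
    qed (use neg_S in simp)
    ultimately show ?thesis by (simp add: bij_betw_def inj_on_def)
  qed
  have "(\<lambda>x. (- T) x - l *\<^sub>R x) = (\<lambda>x. - (T x - (- l) *\<^sub>R x))" for l
    by (simp add: blinfun.minus_left)
  then have "l \<in> spec_on S (- T) \<longleftrightarrow> - l \<in> spec_on S T" for l
    by (simp only: spec_on_def mem_Collect_eq bij_uminus)
  then show ?thesis by (force simp: image_iff intro: exI[of _ "- l" for l])
qed

lemma Sup_spec_on_eq:
  fixes T :: "'a::real_normed_vector \<Rightarrow>\<^sub>L 'a"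
  assumes "subspace S"
  shows "Sup (spec_on S T) = - Inf (spec_on S (- T))"
  using assms by (simp add: spec_on_uminus Inf_real_def image_image)

section \<open>Off-diagonal perturbations\<close>

lemma orth_proj_inner_compl:
  assumes "orth_proj P"
  shows "inner (P x) (y - P y) = 0"
  using assms by (simp add: orth_proj_def self_adjoint_def inner_diff_right blinfun.diff_right)

lemma orth_proj_pythagoras:
  assumes "orth_proj P"
  shows "(norm x)\<^sup>2 = (norm (P x))\<^sup>2 + (norm (x - P x))\<^sup>2"
  using norm_add_Pythagorean[of "P x" "x - P x"] orth_proj_inner_compl[OF assms]
  by (simp add: orthogonal_def)

lemma self_adjoint_form_add:
  assumes "self_adjoint T"
  shows "inner (T (u + w)) (u + w) = inner (T u) u + 2 * inner (T u) w + inner (T w) w"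
proof -
  have "inner (T w) u = inner w (T u)"
    using assms by (simp add: self_adjoint_def)
  also have "\<dots> = inner (T u) w" by (rule inner_commute)
  finally show ?thesis by (simp add: blinfun.add_right inner_add_left inner_add_right)
qed

locale off_diagonal_perturbation =
  fixes A V P :: "'a::{real_inner, complete_space} \<Rightarrow>\<^sub>L 'a"
  assumes self_adjoint_A: "self_adjoint A" and self_adjoint_V: "self_adjoint V"
    and orth_proj_P: "orth_proj P"
    and commute: "\<And>x. A (P x) = P (A x)"
    and P_V_P: "\<And>x. P (V (P x)) = 0"
    and Pperp_V_Pperp: "\<And>x. V (x - P x) - P (V (x - P x)) = 0"
begin

abbreviation ran_P :: "'a set" where "ran_P \<equiv> range P"
abbreviation ran_P_perp :: "'a set" where "ran_P_perp \<equiv> range (\<lambda>x. x - P x)"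

lemma P_idem [simp]: "P (P x) = P x"
  using orth_proj_P by (simp add: orth_proj_def)

lemma P_self_adjoint: "inner (P x) y = inner x (P y)"
  using orth_proj_P by (simp add: orth_proj_def self_adjoint_def)

lemma ran_P_eq: "ran_P = {x. P x = x}"
proof (intro equalityI subsetI)
  fix x assume "x \<in> {x. P x = x}"
  then show "x \<in> ran_P" by (intro image_eqI[where x = x]) auto
qed auto

lemma ran_P_perp_eq: "ran_P_perp = {x. P x = 0}"
proof (intro equalityI subsetI)
  fix x assume "x \<in> {x. P x = 0}"
  then show "x \<in> ran_P_perp" by (intro image_eqI[where x = x]) auto
qed (auto simp: blinfun.diff_right)

lemma subspace_ran_P: "subspace ran_P" and subspace_ran_P_perp: "subspace ran_P_perp"
  unfolding ran_P_eq ran_P_perp_eq subspace_def by (simp_all add: blinfun.add_right blinfun.scaleR_right)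

lemma closed_ran_P: "closed ran_P" and closed_ran_P_perp: "closed ran_P_perp"
proof -
  have "continuous_on UNIV P" by (rule linear_continuous_on[OF blinfun.bounded_linear_right])
  then show "closed ran_P" "closed ran_P_perp"
    unfolding ran_P_eq ran_P_perp_eq by (simp_all add: closed_Collect_eq continuous_on_id continuous_on_const)
qed

lemma A_ran_P: "A ` ran_P \<subseteq> ran_P" and A_ran_P_perp: "A ` ran_P_perp \<subseteq> ran_P_perp"
  unfolding ran_P_eq ran_P_perp_eq by (auto simp: commute[symmetric])

lemma form_split: "inner (T x) x = inner (T (P x)) (P x) + 2 * inner (T (P x)) (x - P x)
    + inner (T (x - P x)) (x - P x)" if "self_adjoint T"
  using self_adjoint_form_add[OF that, of "P x" "x - P x"] by simp

lemma form_A_split: "inner (A x) x = inner (A (P x)) (P x) + inner (A (x - P x)) (x - P x)"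
proof -
  have "inner (A (P x)) (x - P x) = 0"
    using orth_proj_inner_compl[OF orth_proj_P] by (simp add: commute)
  then show ?thesis using form_split[OF self_adjoint_A, of x] by simp
qed

lemma form_V_split: "inner (V x) x = 2 * inner (V (P x)) (x - P x)"
proof -
  have "inner (V (P x)) (P x) = 0"
    using P_V_P by (simp add: P_self_adjoint[symmetric])
  moreover have "inner (V (x - P x)) (x - P x) = 0"
  proof -
    have "V (x - P x) = P (V (x - P x))" using Pperp_V_Pperp[of x] by (simp only: right_minus_eq)
    then show ?thesis using orth_proj_inner_compl[OF orth_proj_P, of "V (x - P x)" x] by simp
  qed
  ultimately show ?thesis using form_split[OF self_adjoint_V, of x] by simp
qed

lemma form_V_vanishes: "x \<in> ran_P \<or> x \<in> ran_P_perp \<Longrightarrow> inner (V x) x = 0"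
  unfolding ran_P_eq ran_P_perp_eq by (auto simp: form_V_split)

lemma ran_P_nontrivial:
  assumes "V \<noteq> 0"
  shows "ran_P \<noteq> {0}" "ran_P_perp \<noteq> {0}"
proof -
  show "ran_P \<noteq> {0}"
  proof
    assume "ran_P = {0}"
    then have "P y = 0" for y by (metis imageI UNIV_I singletonD)
    then have "V y = 0" for y using Pperp_V_Pperp[of y] by simp
    then show False using assms by (simp add: blinfun_eqI)
  qed
  show "ran_P_perp \<noteq> {0}"
  proof
    assume "ran_P_perp = {0}"
    then have "P y = y" for y by (metis (no_types) imageI UNIV_I singletonD right_minus_eq)
    then have "V y = 0" for y using P_V_P[of y] by simp
    then show False using assms by (simp add: blinfun_eqI)
  qed
qed

lemma rayleigh_inf_eq_min:
  assumes "ran_P \<noteq> {0}" "ran_P_perp \<noteq> {0}"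
  shows "rayleigh_inf UNIV A = min (rayleigh_inf ran_P A) (rayleigh_inf ran_P_perp A)"
    (is "?a = min ?b (?c :: real)")
proof (rule antisym)
  show "?a \<le> min ?b ?c"
    using assms subspace_ran_P subspace_ran_P_perp by (simp add: rayleigh_inf_mono)
  show "min ?b ?c \<le> ?a"
  proof (rule rayleigh_inf_greatest)
    show "(UNIV :: 'a set) \<noteq> {0}" using assms(1) subspace_0[OF subspace_ran_P] by auto
    fix x :: 'a assume "norm x = 1"
    then have "(norm (P x))\<^sup>2 + (norm (x - P x))\<^sup>2 = 1"
      using orth_proj_pythagoras[OF orth_proj_P, of x] by simp
    then have "min ?b ?c = min ?b ?c * (norm (P x))\<^sup>2 + min ?b ?c * (norm (x - P x))\<^sup>2"
      by (simp flip: distrib_left)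
    also have "\<dots> \<le> ?b * (norm (P x))\<^sup>2 + ?c * (norm (x - P x))\<^sup>2"
      by (intro add_mono mult_right_mono) auto
    also have "\<dots> \<le> inner (A (P x)) (P x) + inner (A (x - P x)) (x - P x)"
      by (intro add_mono rayleigh_inf_mult_norm_le subspace_ran_P subspace_ran_P_perp) auto
    also have "\<dots> = inner (A x) x"
      by (rule form_A_split[symmetric])
    finally show "min ?b ?c \<le> inner (A x) x" .
  qed simp
qed

lemma rayleigh_inf_perturbed_le:
  assumes "ran_P \<noteq> {0}" "ran_P_perp \<noteq> {0}"
  shows "rayleigh_inf UNIV (A + V) \<le> rayleigh_inf UNIV A"
proof -
  have "rayleigh_inf UNIV (A + V) \<le> rayleigh_inf S A" if "S = ran_P \<or> S = ran_P_perp" for S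
  proof -
    have "rayleigh_inf UNIV (A + V) \<le> rayleigh_inf S (A + V)"
      using that assms subspace_ran_P subspace_ran_P_perp by (intro rayleigh_inf_mono) auto
    also have "\<dots> = rayleigh_inf S A"
      using that form_V_vanishes by (intro rayleigh_inf_cong) (auto simp: blinfun.add_left inner_add_left)
    finally show ?thesis .
  qed
  then show ?thesis by (simp add: rayleigh_inf_eq_min[OF assms])
qed

lemma rayleigh_inf_perturbed_ge:
  assumes "ran_P \<noteq> {0}" "ran_P_perp \<noteq> {0}"
  shows "rayleigh_inf UNIV A - delta_shift (norm V) (rayleigh_inf ran_P_perp A - rayleigh_inf ran_P A)
    \<le> rayleigh_inf UNIV (A + V)"
    (is "?a - delta_shift _ (?c - ?b) \<le> (_ :: real)")
proof (rule rayleigh_inf_greatest)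
  show "(UNIV :: 'a set) \<noteq> {0}" using assms(1) subspace_0[OF subspace_ran_P] by auto
  fix x :: 'a assume "norm x = 1"
  define s where "s = norm (P x)"
  define t where "t = norm (x - P x)"
  define w where "w = inner (V (P x)) (x - P x)"
  have "s\<^sup>2 + t\<^sup>2 = 1"
    using orth_proj_pythagoras[OF orth_proj_P, of x] \<open>norm x = 1\<close> by (simp add: s_def t_def)
  have "\<bar>w\<bar> \<le> norm (V (P x)) * t"
    unfolding w_def t_def by (rule Cauchy_Schwarz_ineq2)
  also have "\<dots> \<le> norm V * s * t"
    unfolding s_def t_def by (intro mult_right_mono norm_blinfun) simp
  finally have "\<bar>w\<bar> \<le> norm V * s * t" .
  then have "(min ?b ?c - delta_shift (norm V) (?c - ?b)) * (s\<^sup>2 + t\<^sup>2)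
      \<le> ?b * s\<^sup>2 + ?c * t\<^sup>2 + 2 * w"
    by (intro block_form_lower_bound) (simp_all add: s_def t_def)
  also have "\<dots> \<le> inner (A (P x)) (P x) + inner (A (x - P x)) (x - P x) + inner (V x) x"
    unfolding s_def t_def w_def form_V_split
    by (intro add_mono rayleigh_inf_mult_norm_le subspace_ran_P subspace_ran_P_perp) auto
  also have "\<dots> = inner ((A + V) x) x"
    by (simp add: form_A_split[of x] blinfun.add_left inner_add_left)
  finally show "?a - delta_shift (norm V) (?c - ?b) \<le> inner ((A + V) x) x"
    using \<open>s\<^sup>2 + t\<^sup>2 = 1\<close> by (simp add: rayleigh_inf_eq_min[OF assms])
qed simp

lemma Inf_spec_bounds:
  "Inf (spec (A + V)) \<le> Inf (spec A)
   \<and> Inf (spec A) - delta_shift (norm V) (Inf (spec_on ran_P_perp A) - Inf (spec_on ran_P A))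
     \<le> Inf (spec (A + V))"
proof (cases "V = 0")
  case True
  then show ?thesis by (simp add: delta_shift_def)
next
  case False
  \<comment> \<open>nontrivial ranges are needed: the spectrum on the zero subspace is empty\<close>
  note nontrivial = ran_P_nontrivial[OF False]
  then have "(UNIV :: 'a set) \<noteq> {0}" using subspace_0[OF subspace_ran_P] by auto
  then have "Inf (spec A) = rayleigh_inf UNIV A" "Inf (spec (A + V)) = rayleigh_inf UNIV (A + V)"
    using self_adjoint_A self_adjoint_add[OF self_adjoint_A self_adjoint_V]
    by (simp_all add: spec_def Inf_spec_on_eq_rayleigh_inf)
  moreover have "Inf (spec_on ran_P A) = rayleigh_inf ran_P A"
    "Inf (spec_on ran_P_perp A) = rayleigh_inf ran_P_perp A"
    using nontrivial self_adjoint_A subspace_ran_P closed_ran_P A_ran_P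
      subspace_ran_P_perp closed_ran_P_perp A_ran_P_perp
    by (simp_all add: Inf_spec_on_eq_rayleigh_inf)
  ultimately show ?thesis
    using rayleigh_inf_perturbed_le[OF nontrivial] rayleigh_inf_perturbed_ge[OF nontrivial] by simp
qed

lemma uminus_perturbation: "off_diagonal_perturbation (- A) (- V) P"
proof
  show "self_adjoint (- A)" "self_adjoint (- V)"
    by (simp_all add: self_adjoint_uminus self_adjoint_A self_adjoint_V)
  show "orth_proj P" by (rule orth_proj_P)
  fix x
  show "(- A) (P x) = P ((- A) x)"
    by (simp add: blinfun.minus_left blinfun.minus_right commute)
  show "P ((- V) (P x)) = 0"
    by (simp add: blinfun.minus_left blinfun.minus_right P_V_P)
  show "(- V) (x - P x) - P ((- V) (x - P x)) = 0"
    using Pperp_V_Pperp[of x] by (simp add: blinfun.minus_left blinfun.minus_right)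
qed

end

theorem lemma1p1:
  fixes A V P :: "'a::{real_inner, complete_space} \<Rightarrow>\<^sub>L 'a"
  assumes "self_adjoint A" and "self_adjoint V"
    and "orth_proj P"
    and "\<forall>x. A (P x) = P (A x)"
    and "\<forall>x. P (V (P x)) = 0"
    and "\<forall>x. V (x - P x) - P (V (x - P x)) = 0"
  shows "Inf (spec (A + V)) \<le> Inf (spec A)
     \<and> Inf (spec A) - delta_shift (norm V)
          (Inf (spec_on (range (\<lambda>x. x - P x)) A) - Inf (spec_on (range P) A))
        \<le> Inf (spec (A + V))
     \<and> Sup (spec A) \<le> Sup (spec (A + V))
     \<and> Sup (spec (A + V)) \<le> Sup (spec A) + delta_shift (norm V)
          (Sup (spec_on (range (\<lambda>x. x - P x)) A) - Sup (spec_on (range P) A))"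
proof -
  interpret off_diagonal_perturbation A V P
    using assms by unfold_locales auto
  interpret neg: off_diagonal_perturbation "- A" "- V" P
    by (rule uminus_perturbation)
  have "Sup (spec T) = - Inf (spec (- T))" for T :: "'a \<Rightarrow>\<^sub>L 'a"
    unfolding spec_def by (rule Sup_spec_on_eq[OF subspace_UNIV])
  moreover have "Sup (spec_on S A) = - Inf (spec_on S (- A))" if "S = ran_P \<or> S = ran_P_perp" for S
    using that subspace_ran_P subspace_ran_P_perp Sup_spec_on_eq by blast
  moreover have "delta_shift (norm V) (- a + b) = delta_shift (norm V) (a - b)" for a b
    using delta_shift_uminus[of "norm V" "a - b"] by simp
  moreover have "- A + - V = - (A + V)" by simp
  ultimately show ?thesis
    using Inf_spec_bounds neg.Inf_spec_bounds by auto
qed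

end
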